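(* Let $M$ be a $3\times 3$ integer matrix, all of whose eigenvalues have modulus $>1$, let $m=|\det M|$, and let $T\subset\mathbb R^3$ be a self-affine lattice tile with respect to $M$ (and some standard digit set). If $T$ is conjugate to a self-similar tile, then at least one of the following holds: (i) $m$ is the cube of an integer; in particular $m\ge 8$; (ii) there is $s\in\{+1,-1\}$ such that $M$ is similar over $\mathbb R$ to the matrix $\begin{pmatrix}0&0&s\,m\\1&0&0\\0&1&0\end{pmatrix}$ (equivalently, the characteristic polynomial of $M$ is $\lambda^3-s\,m$).
   Context: A self-affine lattice tile with respect to an integer expanding matrix $M$ (all eigenvalues of modulus $>1$) is the unique nonempty compact set $T$ with $MT=\bigcup_{j=1}^m (T+k_j)$, where $m=|\det M|$ and $\{k_1,\dots,k_m\}\subset\mathbb Z^3$ is a complete set of residues of $\mathbb Z^3$ modulo $M\mathbb Z^3$ (a standard digit set). $T$ is conjugate to a self-similar tile if there is an invertible linear map $h$ of $\mathbb R^3$ such that $hMh^{-1}$ is a positive multiple of an orthogonal map; in that case all eigenvalues of $M$ have the same modulus. *)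

theory Defs
  imports "HOL-Analysis.Analysis"
begin

definition int_vec :: "real^3 \<Rightarrow> bool" where
  "int_vec v \<longleftrightarrow> (\<forall>i. v $ i \<in> \<int>)"

definition int_matrix :: "real^3^3 \<Rightarrow> bool" where
  "int_matrix M \<longleftrightarrow> (\<forall>i j. M $ i $ j \<in> \<int>)"

definition complex_eigenvalue :: "real^3^3 \<Rightarrow> complex \<Rightarrow> bool" where
  "complex_eigenvalue M z \<longleftrightarrow> det (mat z - map_matrix complex_of_real M) = 0"

definition expanding :: "real^3^3 \<Rightarrow> bool" where
  "expanding M \<longleftrightarrow> (\<forall>z. complex_eigenvalue M z \<longrightarrow> norm z > 1)"

definition standard_digit_set :: "real^3^3 \<Rightarrow> (real^3) set \<Rightarrow> bool" where
  "standard_digit_set M D \<longleftrightarrow>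
     finite D \<and> card D = nat \<lfloor>\<bar>det M\<bar>\<rfloor> \<and> (\<forall>d\<in>D. int_vec d) \<and>
     (\<forall>z. int_vec z \<longrightarrow> (\<exists>!d\<in>D. \<exists>w. int_vec w \<and> z - d = M *v w))"

definition self_affine_lattice_tile :: "real^3^3 \<Rightarrow> (real^3) set \<Rightarrow> bool" where
  "self_affine_lattice_tile M T \<longleftrightarrow>
     (\<exists>D. standard_digit_set M D \<and> T \<noteq> {} \<and> compact T \<and>
          (\<lambda>x. M *v x) ` T = (\<Union>d\<in>D. (\<lambda>x. x + d) ` T))"

definition conjugate_to_self_similar :: "real^3^3 \<Rightarrow> (real^3) set \<Rightarrow> bool" where
  "conjugate_to_self_similar M T \<longleftrightarrow>
     (\<exists>h::real^3^3. \<exists>c::real. \<exists>Q::real^3^3. invertible h \<and> c > 0 \<and> orthogonal_matrix Q \<and>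
        h ** M ** matrix_inv h = c *\<^sub>R Q)"

definition similar_over_reals :: "real^3^3 \<Rightarrow> real^3^3 \<Rightarrow> bool" where
  "similar_over_reals A B \<longleftrightarrow> (\<exists>P::real^3^3. invertible P \<and> A = P ** B ** matrix_inv P)"

definition comp_matrix :: "real \<Rightarrow> real^3^3" where
  "comp_matrix a = vector [vector [0, 0, a], vector [1, 0, 0], vector [0, 1, 0]]"

end

theory Submission
  imports Defs
begin

text \<open>
  If h M h^-1 = c Q with Q orthogonal, then M has the real eigenvalue r = c det Q, because an
  orthogonal map in odd dimension has det Q as an eigenvalue; moreover r^3 = c^3 det Q = det M.
  Substituting r into the characteristic polynomial x^3 - t x^2 + \<sigma> x - det M
  (\<sigma> = principal_minor_sum M) gives \<sigma> = t r.
  If the trace t is nonzero, r = \<sigma> / t is rational with integral cube, hence an integer, and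
  expansiveness gives \<bar>r\<bar> \<ge> 2, so m = \<bar>r\<bar>^3 \<ge> 8. If t = 0, the characteristic polynomial is
  x^3 - det M, whose factor x^2 + r x + r^2 has no real root; this yields a cyclic vector, so M
  is similar to the companion matrix of x^3 - det M.
\<close>

lemma matrix_inv_invertible:
  assumes "invertible A"
  shows "A ** matrix_inv A = mat 1" and "matrix_inv A ** A = mat 1"
proof -
  have "A ** matrix_inv A = mat 1 \<and> matrix_inv A ** A = mat 1"
    using assms unfolding invertible_def matrix_inv_def by (rule someI_ex)
  then show "A ** matrix_inv A = mat 1" and "matrix_inv A ** A = mat 1" by auto
qed

lemma matrix_diff_ldistrib: "A ** (B - C) = A ** B - A ** (C::real^'n^'m)"
  by (simp add: matrix_matrix_mult_def vec_eq_iff sum_subtractf algebra_simps)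

lemma matrix_diff_rdistrib: "(A - B) ** C = A ** C - B ** (C::real^'n^'m)"
  by (simp add: matrix_matrix_mult_def vec_eq_iff sum_subtractf algebra_simps)

lemma mat_eq_scaleR_mat_1: "mat r = r *\<^sub>R (mat 1 :: real^'n^'n)"
  by (simp add: mat_def vec_eq_iff)

lemma det_scaleR: "det (k *\<^sub>R A) = k ^ CARD('n) * det (A::real^'n^'n)"
proof -
  have "k *\<^sub>R A = mat k ** A"
    by (simp add: mat_eq_scaleR_mat_1[of k] scalar_matrix_assoc[symmetric])
  then show ?thesis
    by (simp add: det_mul flip: matrix_scaleR)
qed

lemma det_conj:
  fixes A h :: "'a::field^'n^'n"
  assumes "invertible h"
  shows "det (h ** A ** matrix_inv h) = det A"
proof -
  have "det (h ** A ** matrix_inv h) = det A * (det h * det (matrix_inv h))"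
    by (simp add: det_mul)
  also have "det h * det (matrix_inv h) = 1"
    by (metis matrix_inv_invertible(1)[OF assms] det_mul det_I)
  finally show ?thesis by simp
qed

lemma mat_diff_conj:
  fixes A h :: "real^'n^'n"
  assumes "invertible h"
  shows "mat r - h ** A ** matrix_inv h = h ** (mat r - A) ** matrix_inv h"
proof -
  have "h ** mat r ** matrix_inv h = mat r"
    by (simp add: mat_eq_scaleR_mat_1[of r] matrix_scalar_ac scalar_matrix_assoc[symmetric]
        matrix_inv_invertible[OF assms])
  then show ?thesis by (simp add: matrix_diff_ldistrib matrix_diff_rdistrib)
qed

lemma det_eq_zero_kernel:
  fixes A :: "real^'n^'n"
  assumes "det A = 0"
  obtains x where "x \<noteq> 0" and "A *v x = 0"
  using assms invertible_det_nz invertible_left_inverse matrix_left_invertible_ker by metis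

lemma orthogonal_matrix_det_eigenvalue:
  fixes Q :: "real^'n^'n"
  assumes "orthogonal_matrix Q" and "odd CARD('n)"
  shows "det (mat (det Q) - Q) = 0"
proof -
  define d where "d = det Q"
  have "d = 1 \<or> d = -1"
    using det_orthogonal_matrix[OF assms(1)] by (simp add: d_def)
  then have d_pow: "(- d) ^ CARD('n) = - d"
    using assms(2) by auto
  have QQt: "Q ** transpose Q = mat 1"
    using assms(1) orthogonal_matrix_def by auto
  have "transpose (mat d - Q) = mat d - transpose Q"
    by (simp add: transpose_def mat_def vec_eq_iff)
  then have "Q ** transpose (mat d - Q) = Q ** (mat d - transpose Q)"
    by (rule arg_cong)
  also have "\<dots> = d *\<^sub>R Q - mat 1"
    by (simp add: matrix_diff_ldistrib QQt mat_eq_scaleR_mat_1[of d] matrix_scalar_ac)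
  also have "\<dots> = (- d) *\<^sub>R (mat d - Q)"
    using \<open>d = 1 \<or> d = -1\<close> by (auto simp: mat_eq_scaleR_mat_1[of d] algebra_simps)
  finally have "d * det (mat d - Q) = (- d) ^ CARD('n) * det (mat d - Q)"
    by (metis d_def det_mul det_scaleR det_transpose)
  then show ?thesis
    using d_pow \<open>d = 1 \<or> d = -1\<close> by (auto simp: d_def)
qed

lemma Ints_if_Rats_power_Ints:
  fixes x :: real
  assumes "x \<in> \<rat>" and "x ^ n \<in> \<int>" and "n > 0"
  shows "x \<in> \<int>"
proof -
  obtain a b :: int where "b > 0" and "coprime a b" and x: "x = of_int a / of_int b"
    using Rats_cases'[OF assms(1)] by metis
  obtain k :: int where "x ^ n = of_int k"
    using assms(2) Ints_cases by metis
  then have "real_of_int (a ^ n) = of_int (k * b ^ n)"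
    using \<open>b > 0\<close> by (simp add: x field_simps)
  then have "b dvd a ^ n"
    using \<open>n > 0\<close> by (metis dvd_mult2 dvd_power of_int_eq_iff mult.commute)
  moreover have "coprime (a ^ n) b"
    using \<open>coprime a b\<close> by simp
  ultimately have "is_unit b"
    by (meson coprime_common_divisor dvd_refl)
  then have "b = 1"
    using \<open>b > 0\<close> by simp
  then show ?thesis
    by (simp add: x)
qed

lemma complex_eigenvalue_of_real:
  "complex_eigenvalue M (complex_of_real r) \<longleftrightarrow> det (mat r - M) = 0"
proof -
  have "det (mat (complex_of_real r) - map_matrix complex_of_real M) = complex_of_real (det (mat r - M))"
    unfolding det_3 by (simp add: mat_def)
  then show ?thesis
    unfolding complex_eigenvalue_def by simp
qed

lemma expanding_real_eigenvalue:
  assumes "expanding M" and "det (mat r - M) = 0"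
  shows "\<bar>r\<bar> > 1"
  using assms complex_eigenvalue_of_real[of M r] unfolding expanding_def by auto

definition principal_minor_sum :: "real^3^3 \<Rightarrow> real" where
  "principal_minor_sum M = M$1$1 * M$2$2 - M$1$2 * M$2$1 + M$1$1 * M$3$3 - M$1$3 * M$3$1
     + M$2$2 * M$3$3 - M$2$3 * M$3$2"

lemma trace_3: "trace (M::'a::semiring_1^3^3) = M$1$1 + M$2$2 + M$3$3"
  by (simp add: trace_def sum_3)

lemma det_mat_diff_3:
  "det (mat x - M) = x ^ 3 - trace M * x\<^sup>2 + principal_minor_sum M * x - det (M::real^3^3)"
  unfolding det_3 trace_3 principal_minor_sum_def
  by (simp add: mat_def algebra_simps power2_eq_square power3_eq_cube)

lemma cayley_hamilton_3:
  "M ** M ** M = trace M *\<^sub>R (M ** M) - principal_minor_sum M *\<^sub>R M + det (M::real^3^3) *\<^sub>R mat 1"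
  unfolding det_3 trace_3 principal_minor_sum_def
  by (simp add: vec_eq_iff forall_3 matrix_matrix_mult_def sum_3 mat_def; algebra)

lemma int_matrix_Ints:
  assumes "int_matrix M"
  shows "det M \<in> \<int>" and "trace M \<in> \<int>" and "principal_minor_sum M \<in> \<int>"
  using assms unfolding int_matrix_def det_3 trace_3 principal_minor_sum_def
  by (auto intro!: Ints_add Ints_mult Ints_diff)

lemma principal_minor_sum_eq_trace_mult:
  assumes "det (mat r - M) = 0" and "r ^ 3 = det M" and "r \<noteq> 0"
  shows "principal_minor_sum M = trace M * r"
proof -
  have "r * (principal_minor_sum M - trace M * r) = 0"
    using assms(1,2) det_mat_diff_3[of r M]
    by (simp add: algebra_simps power2_eq_square power3_eq_cube)
  then show ?thesis
    using assms(3) by simp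
qed

lemma real_eigenvalue_Ints_if_trace_nonzero:
  assumes "int_matrix M" and "det (mat r - M) = 0" and "r ^ 3 = det M" and "trace M \<noteq> 0"
  shows "r \<in> \<int>"
proof (cases "r = 0")
  case False
  then have "r = principal_minor_sum M / trace M"
    using principal_minor_sum_eq_trace_mult[OF assms(2,3)] assms(4) by simp
  moreover have "principal_minor_sum M \<in> \<rat>" and "trace M \<in> \<rat>"
    using int_matrix_Ints[OF assms(1)] Ints_subset_Rats by auto
  ultimately have "r \<in> \<rat>"
    by simp
  moreover have "r ^ 3 \<in> \<int>"
    using int_matrix_Ints(1)[OF assms(1)] assms(3) by simp
  ultimately show ?thesis
    by (rule Ints_if_Rats_power_Ints) simp
qed simp

definition cyclic_vector :: "real^3^3 \<Rightarrow> real^3 \<Rightarrow> bool" where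
  "cyclic_vector M v \<longleftrightarrow>
     (\<forall>x::real^3. x$1 *\<^sub>R v + x$2 *\<^sub>R (M *v v) + x$3 *\<^sub>R (M *v (M *v v)) = 0 \<longrightarrow> x = 0)"

lemma comp_matrix_mult_vec: "comp_matrix e *v x = vector [e * x$3, x$1, x$2]"
  by (simp add: vec_eq_iff forall_3 comp_matrix_def matrix_vector_mult_def sum_3)

lemma similar_comp_matrix_if_cyclic_vector:
  assumes "cyclic_vector M v" and "M *v (M *v (M *v v)) = e *\<^sub>R v"
  shows "similar_over_reals M (comp_matrix e)"
proof -
  define P :: "real^3^3" where
    "P = (\<chi> i j. if j = 1 then v $ i else if j = 2 then (M *v v) $ i else (M *v (M *v v)) $ i)"
  have P: "P *v x = x$1 *\<^sub>R v + x$2 *\<^sub>R (M *v v) + x$3 *\<^sub>R (M *v (M *v v))" for x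
    by (simp add: vec_eq_iff P_def matrix_vector_mult_def sum_3 algebra_simps)
  have "invertible P"
    using assms(1) unfolding cyclic_vector_def P[symmetric]
    by (metis invertible_left_inverse matrix_left_invertible_ker)
  have "M ** P = P ** comp_matrix e"
    unfolding matrix_eq
  proof
    fix x
    have "(M ** P) *v x = x$1 *\<^sub>R (M *v v) + x$2 *\<^sub>R (M *v (M *v v)) + (e * x$3) *\<^sub>R v"
      by (simp add: P assms(2) matrix_vector_mul_assoc[symmetric] matrix_vector_right_distrib
          matrix_vector_mult_scaleR)
    also have "\<dots> = (P ** comp_matrix e) *v x"
      by (simp add: P comp_matrix_mult_vec algebra_simps matrix_vector_mul_assoc[symmetric])
    finally show "(M ** P) *v x = (P ** comp_matrix e) *v x" .
  qed
  then have "M = P ** comp_matrix e ** matrix_inv P"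
    by (metis matrix_inv_invertible(1)[OF \<open>invertible P\<close>] matrix_mul_assoc matrix_mul_rid)
  then show ?thesis
    unfolding similar_over_reals_def using \<open>invertible P\<close> by blast
qed

lemma not_eigenvector_if_quadratic_annihilates:
  fixes M :: "real^'n^'n"
  assumes "M *v (M *v w) + r *\<^sub>R (M *v w) + r\<^sup>2 *\<^sub>R w = 0" and "w \<noteq> 0" and "r \<noteq> 0"
  shows "M *v w \<noteq> t *\<^sub>R w"
proof
  assume "M *v w = t *\<^sub>R w"
  then have "(t\<^sup>2 + r * t + r\<^sup>2) *\<^sub>R w = 0"
    using assms(1) by (simp add: algebra_simps power2_eq_square)
  moreover have "t\<^sup>2 + r * t + r\<^sup>2 > 0"
  proof -
    have "t\<^sup>2 + r * t + r\<^sup>2 = (t + r / 2)\<^sup>2 + 3 / 4 * r\<^sup>2"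
      by (simp add: power2_eq_square algebra_simps)
    then show ?thesis
      using assms(3) by (simp add: add_nonneg_pos)
  qed
  ultimately show False
    using assms(2) by simp
qed

lemma eigenvector_quadratic_pair_independent:
  fixes M :: "real^'n^'n"
  assumes u: "M *v u = r *\<^sub>R u" "u \<noteq> 0"
    and w: "M *v (M *v w) + r *\<^sub>R (M *v w) + r\<^sup>2 *\<^sub>R w = 0" "w \<noteq> 0"
    and "r \<noteq> 0"
    and rel: "a *\<^sub>R u + b *\<^sub>R w + c *\<^sub>R (M *v w) = 0"
  shows "a = 0" and "b = 0" and "c = 0"
proof -
  define N where "N z = M *v (M *v z) + r *\<^sub>R (M *v z) + r\<^sup>2 *\<^sub>R z" for z
  have N_lin: "N (a *\<^sub>R x + b *\<^sub>R y + c *\<^sub>R z) = a *\<^sub>R N x + b *\<^sub>R N y + c *\<^sub>R N z" for x y z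
    by (simp add: N_def algebra_simps)
  have "N u = (r * r) *\<^sub>R u + (r * r) *\<^sub>R u + (r * r) *\<^sub>R u"
    by (simp add: N_def u(1) matrix_vector_mult_scaleR power2_eq_square)
  also have "\<dots> = (3 * r\<^sup>2) *\<^sub>R u"
    by (simp add: power2_eq_square scaleR_add_left[symmetric])
  finally have Nu: "N u = (3 * r\<^sup>2) *\<^sub>R u" .
  have Nw: "N w = 0"
    by (simp add: N_def w(1))
  have NMw: "N (M *v w) = M *v N w"
    by (simp add: N_def matrix_vector_right_distrib matrix_vector_mult_scaleR)
  have "(a * (3 * r\<^sup>2)) *\<^sub>R u = N (a *\<^sub>R u + b *\<^sub>R w + c *\<^sub>R (M *v w))"
    by (simp add: N_lin Nu Nw NMw)
  also have "\<dots> = 0"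
    by (simp add: rel N_def)
  finally have "(a * (3 * r\<^sup>2)) *\<^sub>R u = 0" .
  then show "a = 0"
    using u(2) \<open>r \<noteq> 0\<close> by simp
  with rel have "b *\<^sub>R w + c *\<^sub>R (M *v w) = 0"
    by simp
  moreover have "c = 0"
  proof (rule ccontr)
    assume "c \<noteq> 0"
    have "c *\<^sub>R (M *v w) = - (b *\<^sub>R w)"
      using \<open>b *\<^sub>R w + c *\<^sub>R (M *v w) = 0\<close> by (simp add: eq_neg_iff_add_eq_0 add.commute)
    then have "(1 / c) *\<^sub>R (c *\<^sub>R (M *v w)) = (- b / c) *\<^sub>R w"
      by simp
    then have "M *v w = (- b / c) *\<^sub>R w"
      using \<open>c \<noteq> 0\<close> by simp
    then show False
      using not_eigenvector_if_quadratic_annihilates[OF w \<open>r \<noteq> 0\<close>] by blast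
  qed
  ultimately show "c = 0" and "b = 0"
    using w(2) by simp_all
qed

lemma cyclic_vector_exists:
  fixes M :: "real^3^3"
  assumes cube: "M ** M ** M = r ^ 3 *\<^sub>R mat 1" and "r \<noteq> 0"
    and "det (mat r - M) = 0" and "M \<noteq> mat r"
  obtains v where "cyclic_vector M v"
proof -
  obtain u where "u \<noteq> 0" and "(mat r - M) *v u = 0"
    using det_eq_zero_kernel[OF assms(3)] by blast
  then have u: "M *v u = r *\<^sub>R u"
    by (simp add: matrix_vector_mult_diff_rdistrib mat_eq_scaleR_mat_1[of r]
        flip: scaleR_matrix_vector_assoc)
  obtain y where "M *v y \<noteq> r *\<^sub>R y"
    using assms(4) by (auto simp: matrix_eq mat_eq_scaleR_mat_1[of r] simp flip: scaleR_matrix_vector_assoc)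
  \<comment> \<open>w lies in the kernel of M^2 + r M + r^2, the factor of M^3 - r^3 without real eigenvalues,
    and u in that of M - r, so u + w is cyclic.\<close>
  define w where "w = M *v y - r *\<^sub>R y"
  have "w \<noteq> 0"
    using \<open>M *v y \<noteq> r *\<^sub>R y\<close> by (simp add: w_def)
  have "M *v (M *v (M *v y)) = r ^ 3 *\<^sub>R y"
    by (simp add: matrix_vector_mul_assoc matrix_mul_assoc cube flip: scaleR_matrix_vector_assoc)
  then have w: "M *v (M *v w) + r *\<^sub>R (M *v w) + r\<^sup>2 *\<^sub>R w = 0"
    by (simp add: w_def algebra_simps power2_eq_square power3_eq_cube)
  have "cyclic_vector M (u + w)"
    unfolding cyclic_vector_def
  proof (intro allI impI)
    fix x :: "real^3"
    assume "x$1 *\<^sub>R (u + w) + x$2 *\<^sub>R (M *v (u + w)) + x$3 *\<^sub>R (M *v (M *v (u + w))) = 0"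
    moreover have "M *v (M *v w) = - r *\<^sub>R (M *v w) - r\<^sup>2 *\<^sub>R w"
      using w by (simp add: algebra_simps eq_neg_iff_add_eq_0)
    ultimately have "(x$1 + x$2 * r + x$3 * r\<^sup>2) *\<^sub>R u + (x$1 - x$3 * r\<^sup>2) *\<^sub>R w
        + (x$2 - x$3 * r) *\<^sub>R (M *v w) = 0"
      by (simp add: u algebra_simps power2_eq_square)
    from eigenvector_quadratic_pair_independent[OF u \<open>u \<noteq> 0\<close> w \<open>w \<noteq> 0\<close> \<open>r \<noteq> 0\<close> this]
    have "x$1 = x$3 * r\<^sup>2" and "x$2 = x$3 * r" and "x$1 + x$2 * r + x$3 * r\<^sup>2 = 0"
      by simp_all
    then have "3 * x$3 * r\<^sup>2 = 0"
      by (simp add: power2_eq_square algebra_simps)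
    then show "x = 0"
      using \<open>r \<noteq> 0\<close> \<open>x$1 = x$3 * r\<^sup>2\<close> \<open>x$2 = x$3 * r\<close> by (simp add: vec_eq_iff forall_3)
  qed
  then show ?thesis ..
qed

lemma similar_comp_matrix_if_trace_zero:
  fixes M :: "real^3^3"
  assumes "trace M = 0" and "det (mat r - M) = 0" and "r ^ 3 = det M" and "r \<noteq> 0"
  shows "similar_over_reals M (comp_matrix (det M))"
proof -
  have "principal_minor_sum M = 0"
    using principal_minor_sum_eq_trace_mult[OF assms(2-4)] assms(1) by simp
  then have cube: "M ** M ** M = r ^ 3 *\<^sub>R mat 1"
    using cayley_hamilton_3[of M] assms(1,3) by simp
  have "trace (mat r :: real^3^3) \<noteq> 0"
    using assms(4) by (simp add: trace_3 mat_def)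
  then have "M \<noteq> mat r"
    using assms(1) by auto
  then obtain v where "cyclic_vector M v"
    using cyclic_vector_exists[OF cube assms(4,2)] by blast
  moreover have "M *v (M *v (M *v v)) = det M *\<^sub>R v"
    by (simp add: matrix_vector_mul_assoc matrix_mul_assoc cube assms(3) flip: scaleR_matrix_vector_assoc)
  ultimately show ?thesis
    by (rule similar_comp_matrix_if_cyclic_vector)
qed

lemma conjugate_to_self_similar_real_eigenvalue:
  assumes "conjugate_to_self_similar M T"
  obtains r where "det (mat r - M) = 0" and "r ^ 3 = det M"
proof -
  obtain h Q :: "real^3^3" and c :: real where "invertible h" and "orthogonal_matrix Q"
    and hM: "h ** M ** matrix_inv h = c *\<^sub>R Q"
    using assms unfolding conjugate_to_self_similar_def by blast
  define d where "d = det Q"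
  have "d = 1 \<or> d = -1"
    using det_orthogonal_matrix[OF \<open>orthogonal_matrix Q\<close>] by (simp add: d_def)
  have "mat (c * d) - c *\<^sub>R Q = c *\<^sub>R (mat d - Q)"
    by (simp add: vec_eq_iff mat_def algebra_simps)
  then have "det (mat (c * d) - c *\<^sub>R Q) = 0"
    using orthogonal_matrix_det_eigenvalue[OF \<open>orthogonal_matrix Q\<close>] by (simp add: det_scaleR d_def)
  then have "det (mat (c * d) - M) = 0"
    using det_conj[OF \<open>invertible h\<close>, of "mat (c * d) - M"] mat_diff_conj[OF \<open>invertible h\<close>] hM
    by metis
  moreover have "det M = (c * d) ^ 3"
    using det_conj[OF \<open>invertible h\<close>, of M] hM \<open>d = 1 \<or> d = -1\<close> by (auto simp: det_scaleR d_def)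
  ultimately show ?thesis
    using that by simp
qed

theorem theorem2p3:
  fixes M :: "real^3^3" and T :: "(real^3) set" and m :: int
  assumes "int_matrix M"
    and "expanding M"
    and "m = \<lfloor>\<bar>det M\<bar>\<rfloor>"
    and "self_affine_lattice_tile M T"
    and "conjugate_to_self_similar M T"
  shows "((\<exists>k::int. m = k ^ 3) \<and> m \<ge> 8) \<or>
         (\<exists>s::real. s \<in> {1, -1} \<and> similar_over_reals M (comp_matrix (s * of_int m)))"
proof -
  obtain r where eig: "det (mat r - M) = 0" and r3: "r ^ 3 = det M"
    using conjugate_to_self_similar_real_eigenvalue[OF assms(5)] by blast
  have "\<bar>r\<bar> > 1"
    using expanding_real_eigenvalue[OF assms(2) eig] .
  have m: "of_int m = \<bar>det M\<bar>"
    using int_matrix_Ints(1)[OF assms(1)] assms(3) by (metis Ints_cases floor_of_int of_int_abs)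
  show ?thesis
  proof (cases "trace M = 0")
    case False
    then obtain k :: int where k: "r = of_int k"
      using real_eigenvalue_Ints_if_trace_nonzero[OF assms(1) eig r3] Ints_cases by metis
    then have "m = \<bar>k\<bar> ^ 3"
      using m r3 by (metis of_int_eq_iff of_int_abs of_int_power power_abs)
    moreover have "\<bar>k\<bar> ^ 3 \<ge> 2 ^ 3"
      using \<open>\<bar>r\<bar> > 1\<close> k by (intro power_mono) linarith+
    ultimately show ?thesis
      by auto
  next
    case True
    have "r \<noteq> 0"
      using \<open>\<bar>r\<bar> > 1\<close> by auto
    then have "det M \<noteq> 0"
      using r3 by auto
    then have "sgn (det M) \<in> {1, -1}" and "det M = sgn (det M) * of_int m"
      by (auto simp: m sgn_if)
    then show ?thesis
      using similar_comp_matrix_if_trace_zero[OF True eig r3 \<open>r \<noteq> 0\<close>] by metis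
  qed
qed

end
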